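(* Let $\gamma_1,\ldots,\gamma_m\in\mathbb R^{m-n}$ be such that $L=\mathbb Z\langle\gamma_1,\ldots,\gamma_m\rangle$ is a lattice of rank $m-n$, let $\delta\in\mathbb R^{m-n}$, and let $$\mathcal Z_{\Gamma,\delta}=\Bigl\{\mathbf z\in\mathbb C^m\colon\sum_{k=1}^m\gamma_{jk}|z_k|^2=\delta_j,\ 1\le j\le m-n\Bigr\},$$ on which the torus $T_\Gamma=\{(e^{2\pi i\langle\gamma_1,\varphi\rangle},\ldots,e^{2\pi i\langle\gamma_m,\varphi\rangle})\colon\varphi\in\mathbb R^{m-n}\}\cong\mathbb R^{m-n}/L^*$ acts coordinatewise. Then the stabiliser subgroup of $\mathbf z\in\mathcal Z_{\Gamma,\delta}$ under the action of $T_\Gamma$ is $L^*_{\mathbf z}/L^*$. Furthermore, if $\mathcal Z_{\Gamma,\delta}$ is nondegenerate, then all these stabilisers are finite, i.e. the action of $T_\Gamma$ on $\mathcal Z_{\Gamma,\delta}$ is almost free.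
   Context: Here $\gamma_{jk}$ denotes the $j$th coordinate of $\gamma_k$. For a subgroup $M\subset\mathbb R^{m-n}$, $M^*=\{\lambda^*\in\mathbb R^{m-n}\colon\langle\lambda^*,\lambda\rangle\in\mathbb Z\text{ for all }\lambda\in M\}$; $L_{\mathbf z}=\mathbb Z\langle\gamma_i\colon z_i\ne0\rangle\subset L$, so $L^*\subset L^*_{\mathbf z}$ and $L^*_{\mathbf z}/L^*\subset\mathbb R^{m-n}/L^*=T_\Gamma$. Nondegenerate means the gradients of the $m-n$ defining functions are linearly independent at every point of $\mathcal Z_{\Gamma,\delta}$. *)

theory Defs
  imports "HOL-Analysis.Analysis"
begin

text \<open>Coordinates of C^m are indexed by a finite type 'm (so m = CARD('m)),
  and R^(m-n) is real^'d (so m - n = CARD('d)).  The family gamma assigns to each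
  k the vector gamma_k in R^(m-n); its j-th coordinate gamma_jk is gamma k $ j.\<close>

definition zspan :: "('i \<Rightarrow> 'a::real_vector) \<Rightarrow> 'i set \<Rightarrow> 'a set" where
  "zspan g I = {\<Sum>i\<in>I. real_of_int (c i) *\<^sub>R g i | c. True}"

definition is_lattice_of_rank :: "'a::euclidean_space set \<Rightarrow> nat \<Rightarrow> bool" where
  "is_lattice_of_rank L r \<longleftrightarrow>
     0 \<in> L \<and> (\<forall>x\<in>L. \<forall>y\<in>L. x - y \<in> L) \<and>
     (\<exists>e>0. \<forall>x\<in>L. x \<noteq> 0 \<longrightarrow> e \<le> norm x) \<and> dim L = r"

definition dual_group :: "'a::real_inner set \<Rightarrow> 'a set" where
  "dual_group M = {l. \<forall>x\<in>M. l \<bullet> x \<in> \<int>}"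

definition LL :: "('m::finite \<Rightarrow> real^'d) \<Rightarrow> (real^'d) set" where
  "LL \<gamma> = zspan \<gamma> UNIV"

definition LLz :: "('m::finite \<Rightarrow> real^'d) \<Rightarrow> complex^'m \<Rightarrow> (real^'d) set" where
  "LLz \<gamma> z = zspan \<gamma> {i. z $ i \<noteq> 0}"

definition ZZ :: "('m::finite \<Rightarrow> real^'d) \<Rightarrow> real^'d \<Rightarrow> (complex^'m) set" where
  "ZZ \<gamma> \<delta> = {z. \<forall>j. (\<Sum>k\<in>UNIV. (\<gamma> k) $ j * (cmod (z $ k))\<^sup>2) = \<delta> $ j}"

definition torus_elt :: "('m::finite \<Rightarrow> real^'d) \<Rightarrow> real^'d \<Rightarrow> complex^'m" where
  "torus_elt \<gamma> \<phi> = (\<chi> k. exp (2 * of_real pi * \<i> * of_real (\<gamma> k \<bullet> \<phi>)))"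

definition torus :: "('m::finite \<Rightarrow> real^'d) \<Rightarrow> (complex^'m) set" where
  "torus \<gamma> = range (torus_elt \<gamma>)"

definition torus_act :: "complex^'m \<Rightarrow> complex^'m \<Rightarrow> complex^'m" where
  "torus_act t z = (\<chi> k. t $ k * z $ k)"

definition stabiliser :: "('m::finite \<Rightarrow> real^'d) \<Rightarrow> complex^'m \<Rightarrow> (complex^'m) set" where
  "stabiliser \<gamma> z = {t \<in> torus \<gamma>. torus_act t z = z}"

definition nondegenerate :: "('m::finite \<Rightarrow> real^'d) \<Rightarrow> real^'d \<Rightarrow> bool" where
  "nondegenerate \<gamma> \<delta> \<longleftrightarrow>
    (\<forall>z\<in>ZZ \<gamma> \<delta>. \<exists>g :: 'd \<Rightarrow> complex^'m.
       (\<forall>j. ((\<lambda>w. \<Sum>k\<in>UNIV. (\<gamma> k) $ j * (cmod (w $ k))\<^sup>2) has_derivative (\<lambda>h. g j \<bullet> h)) (at z)) \<and>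
       (\<forall>c::'d \<Rightarrow> real. (\<Sum>j\<in>UNIV. c j *\<^sub>R g j) = 0 \<longrightarrow> (\<forall>j. c j = 0)))"

end

theory Submission
  imports Defs
begin

(* The torus element with parameter phi has coordinates exp(2 pi i <gamma_k, phi>), so it fixes z
   exactly when <gamma_k, phi> is an integer for every k with z_k ~= 0, i.e. when phi lies in L_z^*.
   For finiteness, nondegeneracy at z says that the gradients (2 gamma_jk z_k)_k are independent,
   which forces the gamma_k with z_k ~= 0 to span R^(m-n).  Writing any gamma_k as a real combination
   of them, the fractional parts of the multiples n gamma_k modulo L_z lie in L and in a bounded set;
   as L is discrete two of them coincide, so some positive multiple N gamma_k lies in L_z.  Hence
   every coordinate of a stabilising torus element is an N-th root of unity. *)

lemma exp_two_pi_i_eq_1_iff: "exp (2 * of_real pi * \<i> * of_real x) = 1 \<longleftrightarrow> x \<in> \<int>"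
proof -
  have "exp (2 * of_real pi * \<i> * of_real x) = 1 \<longleftrightarrow> (\<exists>n::int. 2 * pi * x = of_int (2*n) * pi)"
    by (simp add: exp_eq_1)
  also have "\<dots> \<longleftrightarrow> (\<exists>n::int. x = of_int n)"
    by (auto simp: algebra_simps)
  finally show ?thesis
    by (auto elim: Ints_cases)
qed

lemma zspan_memI: "x = (\<Sum>i\<in>I. real_of_int (c i) *\<^sub>R g i) \<Longrightarrow> x \<in> zspan g I"
  unfolding zspan_def by blast

lemma zspan_0: "0 \<in> zspan g I"
  unfolding zspan_def by (auto intro!: exI[of _ "\<lambda>_. 0"])

lemma zspan_generator: "finite I \<Longrightarrow> i \<in> I \<Longrightarrow> g i \<in> zspan g I"
  unfolding zspan_def
  by (auto intro!: exI[of _ "\<lambda>j. if j = i then 1 else 0"]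
           simp: if_distrib[of "\<lambda>a. real_of_int a *\<^sub>R _"] cong: if_cong)

lemma zspan_diff:
  assumes "x \<in> zspan g I" and "y \<in> zspan g I"
  shows "x - y \<in> zspan g I"
proof -
  obtain c d where "x = (\<Sum>i\<in>I. real_of_int (c i) *\<^sub>R g i)" "y = (\<Sum>i\<in>I. real_of_int (d i) *\<^sub>R g i)"
    using assms unfolding zspan_def by blast
  then have "x - y = (\<Sum>i\<in>I. real_of_int (c i - d i) *\<^sub>R g i)"
    by (simp add: sum_subtractf scaleR_diff_left)
  then show ?thesis
    by (rule zspan_memI)
qed

lemma zspan_add: "x \<in> zspan g I \<Longrightarrow> y \<in> zspan g I \<Longrightarrow> x + y \<in> zspan g I"
  using zspan_diff[of x g I "-y"] zspan_diff[of 0 g I y] zspan_0 by fastforce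

lemma zspan_scaleR_int:
  assumes "x \<in> zspan g I"
  shows "of_int n *\<^sub>R x \<in> zspan g I"
proof -
  obtain c where "x = (\<Sum>i\<in>I. real_of_int (c i) *\<^sub>R g i)"
    using assms unfolding zspan_def by blast
  then have "of_int n *\<^sub>R x = (\<Sum>i\<in>I. real_of_int (n * c i) *\<^sub>R g i)"
    by (simp add: scaleR_sum_right)
  then show ?thesis
    by (rule zspan_memI)
qed

lemma zspan_sum: "(\<And>a. a \<in> A \<Longrightarrow> f a \<in> zspan g I) \<Longrightarrow> sum f A \<in> zspan g I"
  by (induction A rule: infinite_finite_induct) (auto intro: zspan_add zspan_0)

lemma dual_group_zspan_iff:
  assumes "finite I"
  shows "\<phi> \<in> dual_group (zspan g I) \<longleftrightarrow> (\<forall>i\<in>I. \<phi> \<bullet> g i \<in> \<int>)"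
proof
  assume "\<phi> \<in> dual_group (zspan g I)"
  then show "\<forall>i\<in>I. \<phi> \<bullet> g i \<in> \<int>"
    using zspan_generator[OF assms] unfolding dual_group_def by blast
next
  assume int: "\<forall>i\<in>I. \<phi> \<bullet> g i \<in> \<int>"
  have "\<phi> \<bullet> (\<Sum>i\<in>I. real_of_int (c i) *\<^sub>R g i) \<in> \<int>" for c
    using int by (auto simp: inner_sum_right intro!: Ints_sum Ints_mult)
  then show "\<phi> \<in> dual_group (zspan g I)"
    unfolding dual_group_def zspan_def by blast
qed

lemma torus_elt_nth_eq_1_iff: "torus_elt \<gamma> \<phi> $ k = 1 \<longleftrightarrow> \<phi> \<bullet> \<gamma> k \<in> \<int>"
  unfolding torus_elt_def by (simp add: exp_two_pi_i_eq_1_iff inner_commute)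

lemma torus_act_torus_elt_eq_iff:
  "torus_act (torus_elt \<gamma> \<phi>) z = z \<longleftrightarrow> \<phi> \<in> dual_group (LLz \<gamma> z)"
proof -
  have "torus_act (torus_elt \<gamma> \<phi>) z = z \<longleftrightarrow> (\<forall>k. z $ k \<noteq> 0 \<longrightarrow> torus_elt \<gamma> \<phi> $ k = 1)"
    unfolding torus_act_def vec_eq_iff by auto
  then show ?thesis
    unfolding LLz_def by (simp add: dual_group_zspan_iff torus_elt_nth_eq_1_iff)
qed

lemma torus_elt_eq_1_iff: "torus_elt \<gamma> \<phi> = (\<chi> k. 1) \<longleftrightarrow> \<phi> \<in> dual_group (LL \<gamma>)"
  unfolding LL_def vec_eq_iff by (simp add: dual_group_zspan_iff torus_elt_nth_eq_1_iff)

lemma stabiliser_eq_image_dual_group: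
  "stabiliser \<gamma> z = torus_elt \<gamma> ` dual_group (LLz \<gamma> z)"
  unfolding stabiliser_def torus_def by (auto simp: torus_act_torus_elt_eq_iff)

lemma torus_elt_mem_stabiliser_iff:
  "torus_elt \<gamma> \<phi> \<in> stabiliser \<gamma> z \<longleftrightarrow> \<phi> \<in> dual_group (LLz \<gamma> z)"
  unfolding stabiliser_def torus_def by (simp add: torus_act_torus_elt_eq_iff)

lemma torus_elt_nth_power_eq_1:
  assumes "real N *\<^sub>R \<gamma> k \<in> M" and "\<phi> \<in> dual_group M"
  shows "(torus_elt \<gamma> \<phi> $ k) ^ N = 1"
proof -
  have "real N * (\<gamma> k \<bullet> \<phi>) \<in> \<int>"
    using assms unfolding dual_group_def by (force simp: inner_commute)
  moreover have "(torus_elt \<gamma> \<phi> $ k) ^ N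
      = exp (2 * of_real pi * \<i> * of_real (real N * (\<gamma> k \<bullet> \<phi>)))"
    unfolding torus_elt_def by (simp add: exp_of_nat_mult[symmetric] algebra_simps)
  ultimately show ?thesis
    by (simp only: exp_two_pi_i_eq_1_iff)
qed

lemma finite_torus_elt_image_dual_group:
  fixes \<gamma> :: "'m::finite \<Rightarrow> real^'d"
  assumes "\<forall>k. \<exists>N>0. real N *\<^sub>R \<gamma> k \<in> M"
  shows "finite (torus_elt \<gamma> ` dual_group M)"
proof -
  obtain N where N: "\<And>k. N k > 0" "\<And>k. real (N k) *\<^sub>R \<gamma> k \<in> M"
    using assms by metis
  let ?R = "PiE UNIV (\<lambda>k. {w::complex. w ^ N k = 1})"
  have "finite ?R"
    using N(1) by (intro finite_PiE finite_roots_unity) (auto simp: Suc_le_eq)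
  moreover have "torus_elt \<gamma> ` dual_group M \<subseteq> (\<lambda>f. \<chi> k. f k) ` ?R"
  proof
    fix t assume "t \<in> torus_elt \<gamma> ` dual_group M"
    then obtain \<phi> where "\<phi> \<in> dual_group M" "t = torus_elt \<gamma> \<phi>" by blast
    then have "(t $ k) ^ N k = 1" for k
      using torus_elt_nth_power_eq_1[where \<gamma>=\<gamma> and k=k, OF N(2)] by simp
    then show "t \<in> (\<lambda>f. \<chi> k. f k) ` ?R"
      by (intro image_eqI[where x="\<lambda>k. t $ k"]) auto
  qed
  ultimately show ?thesis
    using finite_surj by blast
qed

lemma has_derivative_weighted_sum_norm_sq:
  fixes z :: "'a::real_inner^'m::finite" and c :: "'m \<Rightarrow> real"
  shows "((\<lambda>w. \<Sum>k\<in>UNIV. c k * (norm (w $ k))\<^sup>2) has_derivative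
           (\<lambda>h. \<Sum>k\<in>UNIV. c k * (2 * (z $ k \<bullet> h $ k)))) (at z)"
  unfolding power2_norm_eq_inner
  by (auto intro!: derivative_eq_intros bounded_linear_imp_has_derivative bounded_linear_vec_nth
           simp: inner_commute)

lemma nondegenerate_orthogonal_support_eq_0:
  fixes \<gamma> :: "'m::finite \<Rightarrow> real^'d"
  assumes "nondegenerate \<gamma> \<delta>" and "z \<in> ZZ \<gamma> \<delta>"
    and orth: "\<And>k. z $ k \<noteq> 0 \<Longrightarrow> c \<bullet> \<gamma> k = 0"
  shows "c = 0"
proof -
  obtain g :: "'d \<Rightarrow> complex^'m" where
    grad: "\<And>j. ((\<lambda>w. \<Sum>k\<in>UNIV. \<gamma> k $ j * (cmod (w $ k))\<^sup>2) has_derivative (\<lambda>h. g j \<bullet> h)) (at z)"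
    and indep: "\<And>c. (\<Sum>j\<in>UNIV. c j *\<^sub>R g j) = 0 \<Longrightarrow> \<forall>j. c j = 0"
    using assms(1,2) unfolding nondegenerate_def by blast
  have g: "g j \<bullet> h = (\<Sum>k\<in>UNIV. \<gamma> k $ j * (2 * (z $ k \<bullet> h $ k)))" for j h
    using has_derivative_unique[OF grad has_derivative_weighted_sum_norm_sq] by meson
  define v where "v = (\<Sum>j\<in>UNIV. c $ j *\<^sub>R g j)"
  \<comment> \<open>v is the gradient at z of \<Sum>k. (c \<bullet> \<gamma> k) |w_k|^2, and every term of it is stationary there\<close>
  have "v \<bullet> h = (\<Sum>j\<in>UNIV. \<Sum>k\<in>UNIV. c $ j * (\<gamma> k $ j * (2 * (z $ k \<bullet> h $ k))))" for h
    by (simp add: v_def inner_sum_left g sum_distrib_left)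
  also have "\<dots> h = (\<Sum>k\<in>UNIV. (c \<bullet> \<gamma> k) * (2 * (z $ k \<bullet> h $ k)))" for h
    by (subst sum.swap) (simp add: inner_vec_def sum_distrib_right mult.assoc)
  also have "\<dots> h = 0" for h
    by (rule sum.neutral) (metis orth inner_zero_left mult_zero_left mult_zero_right)
  finally have "v \<bullet> v = 0" .
  then have "\<forall>j. c $ j = 0"
    using indep unfolding v_def by simp
  then show ?thesis
    by (simp add: vec_eq_iff)
qed

lemma span_eq_UNIV_if_orthogonal_eq_0:
  fixes A :: "'a::euclidean_space set"
  assumes "\<And>c. (\<And>x. x \<in> A \<Longrightarrow> c \<bullet> x = 0) \<Longrightarrow> c = 0"
  shows "span A = UNIV"
  using span_not_UNIV_orthogonal assms span_base by blast

lemma span_image_eq_finite_combination: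
  assumes "finite S" and "x \<in> span (g ` S)"
  shows "\<exists>a. x = (\<Sum>s\<in>S. a s *\<^sub>R g s)"
  using assms(2)
proof (induction rule: span_induct_alt)
  case base
  show ?case
    by (rule exI[of _ "\<lambda>_. 0"]) simp
next
  case (step c u v)
  then obtain i a where "i \<in> S" "u = g i" "v = (\<Sum>s\<in>S. a s *\<^sub>R g s)"
    by blast
  then have "c *\<^sub>R u + v = (\<Sum>s\<in>S. (a s + (if s = i then c else 0)) *\<^sub>R g s)"
    using assms(1) by (simp add: scaleR_add_left sum.distrib if_distrib[of "\<lambda>r. r *\<^sub>R _"] cong: if_cong)
  then show ?case
    by (rule exI[where x="\<lambda>s. a s + (if s = i then c else 0)"])
qed

lemma bounded_seq_close_pair:
  fixes p :: "nat \<Rightarrow> 'a::heine_borel"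
  assumes "bounded (range p)" and "e > 0"
  obtains m n where "m < n" and "dist (p m) (p n) < e"
proof -
  obtain l r where r: "strict_mono r" and "(p \<circ> r) \<longlonglongrightarrow> l"
    using bounded_imp_convergent_subsequence[OF assms(1)] by blast
  then obtain M where "\<And>m n. m \<ge> M \<Longrightarrow> n \<ge> M \<Longrightarrow> dist ((p \<circ> r) m) ((p \<circ> r) n) < e"
    using assms(2) by (meson LIMSEQ_imp_Cauchy metric_CauchyD)
  moreover have "r M < r (Suc M)"
    using r by (simp add: strict_mono_def)
  ultimately show ?thesis
    using that by fastforce
qed

lemma discrete_zspan_multiple_mem_zspan:
  fixes g :: "'i \<Rightarrow> 'a::euclidean_space"
  assumes "finite I" and "S \<subseteq> I" and "e > 0"
    and discrete: "\<And>y. y \<in> zspan g I \<Longrightarrow> y \<noteq> 0 \<Longrightarrow> e \<le> norm y"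
    and "x \<in> zspan g I" and x: "x = (\<Sum>s\<in>S. a s *\<^sub>R g s)"
  shows "\<exists>N>0. real N *\<^sub>R x \<in> zspan g S"
proof -
  define p where "p n = (\<Sum>s\<in>S. frac (real n * a s) *\<^sub>R g s)" for n :: nat
  have p_eq: "p n = real n *\<^sub>R x - (\<Sum>s\<in>S. of_int \<lfloor>real n * a s\<rfloor> *\<^sub>R g s)" for n
    by (simp add: p_def x frac_def scaleR_diff_left sum_subtractf scaleR_sum_right)
  have p_mem: "p n \<in> zspan g I" for n
  proof -
    have "real n *\<^sub>R x \<in> zspan g I"
      using zspan_scaleR_int[OF \<open>x \<in> zspan g I\<close>, of "int n"] by simp
    moreover have "(\<Sum>s\<in>S. of_int \<lfloor>real n * a s\<rfloor> *\<^sub>R g s) \<in> zspan g I"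
      using assms(1,2) by (intro zspan_sum zspan_scaleR_int zspan_generator) auto
    ultimately show ?thesis
      unfolding p_eq by (rule zspan_diff)
  qed
  have "norm (p n) \<le> (\<Sum>s\<in>S. norm (g s))" for n
    unfolding p_def
    by (rule order_trans[OF norm_sum sum_mono])
       (simp add: mult_left_le_one_le frac_lt_1 less_imp_le)
  then have "bounded (range p)"
    by (auto simp: bounded_iff)
  then obtain m n where "m < n" and "dist (p m) (p n) < e"
    using \<open>e > 0\<close> by (rule bounded_seq_close_pair)
  moreover have "p n - p m \<in> zspan g I"
    by (intro zspan_diff p_mem)
  ultimately have "p n = p m"
    using discrete by (force simp: dist_norm norm_minus_commute)
  then have "real n *\<^sub>R x - real m *\<^sub>R x
      = (\<Sum>s\<in>S. of_int \<lfloor>real n * a s\<rfloor> *\<^sub>R g s) - (\<Sum>s\<in>S. of_int \<lfloor>real m * a s\<rfloor> *\<^sub>R g s)"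
    unfolding p_eq by (simp add: algebra_simps)
  then have "real (n - m) *\<^sub>R x = (\<Sum>s\<in>S. of_int (\<lfloor>real n * a s\<rfloor> - \<lfloor>real m * a s\<rfloor>) *\<^sub>R g s)"
    using \<open>m < n\<close> by (simp add: of_nat_diff scaleR_diff_left sum_subtractf)
  then have "real (n - m) *\<^sub>R x \<in> zspan g S"
    by (rule zspan_memI)
  with \<open>m < n\<close> show ?thesis
    by (intro exI[of _ "n - m"]) simp
qed

theorem lemma5p4:
  fixes \<gamma> :: "'m::finite \<Rightarrow> real^'d" and \<delta> :: "real^'d"
  assumes "is_lattice_of_rank (LL \<gamma>) CARD('d)"
  shows "(\<forall>z\<in>ZZ \<gamma> \<delta>. stabiliser \<gamma> z = torus_elt \<gamma> ` dual_group (LLz \<gamma> z)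
            \<and> {\<phi>. torus_elt \<gamma> \<phi> \<in> stabiliser \<gamma> z} = dual_group (LLz \<gamma> z))
         \<and> {\<phi>. torus_elt \<gamma> \<phi> = (\<chi> k. 1)} = dual_group (LL \<gamma>)
         \<and> (nondegenerate \<gamma> \<delta> \<longrightarrow> (\<forall>z\<in>ZZ \<gamma> \<delta>. finite (stabiliser \<gamma> z)))"
proof (intro conjI ballI impI)
  fix z
  show "stabiliser \<gamma> z = torus_elt \<gamma> ` dual_group (LLz \<gamma> z)"
    by (rule stabiliser_eq_image_dual_group)
  show "{\<phi>. torus_elt \<gamma> \<phi> \<in> stabiliser \<gamma> z} = dual_group (LLz \<gamma> z)"
    by (simp add: torus_elt_mem_stabiliser_iff)
next
  show "{\<phi>. torus_elt \<gamma> \<phi> = (\<chi> k. 1)} = dual_group (LL \<gamma>)"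
    by (simp add: torus_elt_eq_1_iff)
next
  fix z assume "nondegenerate \<gamma> \<delta>" and "z \<in> ZZ \<gamma> \<delta>"
  let ?S = "{k. z $ k \<noteq> 0}"
  obtain e where "e > 0" and discrete: "\<And>y. y \<in> LL \<gamma> \<Longrightarrow> y \<noteq> 0 \<Longrightarrow> e \<le> norm y"
    using assms unfolding is_lattice_of_rank_def by blast
  have "span (\<gamma> ` ?S) = UNIV"
    using nondegenerate_orthogonal_support_eq_0[OF \<open>nondegenerate \<gamma> \<delta>\<close> \<open>z \<in> ZZ \<gamma> \<delta>\<close>]
    by (intro span_eq_UNIV_if_orthogonal_eq_0) blast
  have "\<exists>N>0. real N *\<^sub>R \<gamma> k \<in> LLz \<gamma> z" for k
  proof -
    obtain a where "\<gamma> k = (\<Sum>s\<in>?S. a s *\<^sub>R \<gamma> s)"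
      using span_image_eq_finite_combination[of ?S "\<gamma> k" \<gamma>] \<open>span (\<gamma> ` ?S) = UNIV\<close> by auto
    moreover have "\<gamma> k \<in> zspan \<gamma> UNIV"
      by (simp add: zspan_generator)
    ultimately show ?thesis
      unfolding LLz_def using \<open>e > 0\<close> discrete[unfolded LL_def]
      by (intro discrete_zspan_multiple_mem_zspan[of UNIV]) auto
  qed
  then show "finite (stabiliser \<gamma> z)"
    unfolding stabiliser_eq_image_dual_group by (intro finite_torus_elt_image_dual_group) blast
qed

end
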